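(* Let $r\geq1$ be odd, $m\geq 3$, $n=(r+1)m$, let $u$ be an integer with $\gcd(u,2^m-1)=1$, let $\alpha$ be a primitive element of $\mathbb{F}_{2^{rm}}$, let $0\leq s\leq 2^{rm}-2$, let $\Delta_s=\{\alpha^i\mid s\leq i\leq s+2^{rm-1}-1\}$, and let $f\colon\mathbb{F}_{2^{rm}}\times\mathbb{F}_{2^m}\to\mathbb{F}_2$ be the Boolean function with $\mathrm{supp}(f)=\{(\gamma y^u,y)\mid y\in\mathbb{F}_{2^m}^*,\ \gamma\in\Delta_s\}$. Then $f$ is bent if and only if $r=1$ and $u\equiv 2^t\pmod{2^m-1}$ for some non-negative integer $t$.
   Context: $\mathbb{F}_{2^{rm}}\times\mathbb{F}_{2^m}$ is viewed as an $n$-dimensional $\mathbb{F}_2$-vector space ($\mathbb{F}_{2^m}\subseteq\mathbb{F}_{2^{rm}}$). An $n$-variable Boolean function $f$ ($n$ even) is bent if $|W_f(a,b)|=2^{n/2}$ for all $(a,b)\in\mathbb{F}_{2^{rm}}\times\mathbb{F}_{2^m}$, where $W_f(a,b)=\sum_{(x,y)}(-1)^{f(x,y)+\mathrm{tr}^{rm}_1(ax)+\mathrm{tr}^m_1(by)}$ and $\mathrm{tr}^k_1$ is the absolute trace of $\mathbb{F}_{2^k}$. *)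

theory Defs
  imports "HOL-Computational_Algebra.Computational_Algebra" "HOL-Number_Theory.Cong"
begin

text \<open>The ambient field F_{2^{rm}} is modelled as a finite field type 'a with
  CARD('a) = 2^(r*m).  The subfield F_{2^m} is the set of fixed points of
  x \<mapsto> x^(2^m).\<close>

definition subfield_pow2 :: "nat \<Rightarrow> 'a::field set" where
  "subfield_pow2 m = {x. x ^ (2 ^ m) = x}"

definition abs_trace :: "nat \<Rightarrow> 'a::field \<Rightarrow> 'a" where
  "abs_trace k x = (\<Sum>i<k. x ^ (2 ^ i))"

definition sgn_f2 :: "'a::field \<Rightarrow> int" where
  "sgn_f2 z = (if z = 0 then 1 else -1)"

definition sgn_bool :: "bool \<Rightarrow> int" where
  "sgn_bool b = (if b then -1 else 1)"

definition walsh :: "nat \<Rightarrow> nat \<Rightarrow> ('a::{field,finite} \<times> 'a \<Rightarrow> bool) \<Rightarrow> 'a \<Rightarrow> 'a \<Rightarrow> int" where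
  "walsh k m f a b = (\<Sum>x\<in>(UNIV::'a set). \<Sum>y\<in>subfield_pow2 m.
      sgn_bool (f (x, y)) * sgn_f2 (abs_trace k (a * x)) * sgn_f2 (abs_trace m (b * y)))"

definition is_bent :: "nat \<Rightarrow> nat \<Rightarrow> ('a::{field,finite} \<times> 'a \<Rightarrow> bool) \<Rightarrow> bool" where
  "is_bent k m f \<longleftrightarrow> (\<forall>a b. b \<in> subfield_pow2 m \<longrightarrow>
      \<bar>walsh k m f a b\<bar> = 2 ^ ((k + m) div 2))"

definition primitive_element :: "'a::field \<Rightarrow> bool" where
  "primitive_element \<alpha> \<longleftrightarrow> range (\<lambda>i::nat. \<alpha> ^ i) = UNIV - {0}"

definition Delta :: "'a::field \<Rightarrow> nat \<Rightarrow> nat \<Rightarrow> 'a set" where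
  "Delta \<alpha> s k = {\<alpha> ^ i | i. s \<le> i \<and> i \<le> s + 2 ^ (k - 1) - 1}"

end

theory Submission
  imports Defs
begin

(* For r > 1 the function cannot be bent: its support has 2^(rm-1) (2^m - 1) elements, which
   forces W_f(0,0) = 2^(rm) instead of 2^((rm+m)/2).  For r = 1 write q = 2^m and
   chi x = (-1)^tr(x).  For a nonzero, W_f(a,b) = -2 S(a,b) with
   S(a,b) = sum over gamma in Delta_s and y nonzero of chi(a gamma y^u + b y),
   so f is bent iff |S(a,b)| = q/2 for all a nonzero and all b.
   If u = 2^t mod q-1, a power of Frobenius turns chi(a gamma y^u) into chi((a gamma)^(2^j) y),
   and S(a,b) = q * #{gamma in Delta_s. (a gamma)^(2^j) = b} - q/2 with at most one such gamma.
   Conversely, S(alpha^d, 1) is the sum of q/2 consecutive values K(alpha^l) of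
   K(c) = sum over y nonzero of chi(c y^u + y).  Two adjacent such windows cover the cyclic group
   once and alpha^d twice, so they add up to K(alpha^d) + 1; bentness then forces K(c) = q - 1
   for some c, i.e. tr(c y^u) = tr(y) for all y.  Substituting y = z^v with u v = 1 mod q-1 gives
   a polynomial of degree < q vanishing on the whole field, and comparing its coefficients shows
   that v, hence u, is a power of 2 modulo q-1. *)

lemma nonzero_power_card_minus_one:
  fixes x :: "'a::{field,finite}"
  assumes "x \<noteq> 0"
  shows "x ^ (card (UNIV :: 'a set) - 1) = 1"
proof -
  let ?U = "UNIV - {0::'a}"
  have "x ^ card ?U * (\<Prod>y\<in>?U. y) = (\<Prod>y\<in>?U. x * y)"
    by (simp add: prod.distrib)
  also have "\<dots> = (\<Prod>y\<in>?U. y)"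
    by (rule prod.reindex_bij_witness[of _ "\<lambda>y. y / x" "\<lambda>y. x * y"]) (use assms in auto)
  finally have "x ^ card ?U = 1"
    by simp
  then show ?thesis
    by (simp add: card_Diff_singleton)
qed

lemma power_card_eq_self: "(x::'a::{field,finite}) ^ card (UNIV :: 'a set) = x"
proof (cases "x = 0")
  case False
  have "card (UNIV :: 'a set) = Suc (card (UNIV :: 'a set) - 1)"
    by (simp add: finite_UNIV_card_ge_0)
  then show ?thesis
    by (metis False mult.right_neutral nonzero_power_card_minus_one power_Suc)
qed (simp add: finite_UNIV_card_ge_0)

lemma two_eq_zero_if_even_card:
  assumes "even (card (UNIV :: 'a::{field,finite} set))"
  shows "(2::'a) = 0"
proof -
  have "card (UNIV :: 'a set) > 0"
    by (simp add: finite_UNIV_card_ge_0)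
  then have "odd (card (UNIV :: 'a set) - 1)"
    using assms by simp
  then have "(-1::'a) = 1"
    using nonzero_power_card_minus_one[of "-1::'a"] by simp
  then show ?thesis
    by (metis add.right_inverse one_add_one)
qed

lemma abs_trace_0 [simp]: "abs_trace j (0::'a::field) = 0"
  by (simp add: abs_trace_def power_0_left)

lemma bij_mult_left_nonzero: "(c::'a::field) \<noteq> 0 \<Longrightarrow> bij (\<lambda>x. c * x)"
  by (rule bij_betwI[where g="\<lambda>x. x / c"]) auto

lemma poly_eq_0_if_vanishes:
  fixes p :: "'a::{idom,finite} poly"
  assumes "\<And>x. poly p x = 0" and "degree p < card (UNIV :: 'a set)"
  shows "p = 0"
proof (rule ccontr)
  assume "p \<noteq> 0"
  then have "card {x. poly p x = 0} \<le> degree p"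
    by (rule card_poly_roots_bound)
  with assms show False
    by simp
qed

lemma degree_sum_monom_le:
  assumes "\<And>i. i \<in> A \<Longrightarrow> n i \<le> d"
  shows "degree (\<Sum>i\<in>A. monom (a i) (n i)) \<le> d"
proof (cases "finite A")
  case True
  then show ?thesis
    using assms by (intro degree_sum_le order.trans[OF degree_monom_le]) auto
qed simp

context
  assumes two_eq_zero: "(2::'a::field) = 0"
begin

lemma add_self_char_2: "x + x = (0::'a)"
  by (metis mult_2 mult_zero_left two_eq_zero)

lemma uminus_char_2: "- x = (x::'a)"
  using add.inverse_unique[OF add_self_char_2] by simp

lemma add_eq_0_iff_char_2: "x + y = (0::'a) \<longleftrightarrow> x = y"
  using eq_neg_iff_add_eq_0[of x y] uminus_char_2[of y] by simp

lemma frobenius_add: "(x + y) ^ 2 ^ i = x ^ 2 ^ i + (y::'a) ^ 2 ^ i"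
proof (induction i)
  case (Suc i)
  have square: "(a + b) ^ 2 = a ^ 2 + (b::'a) ^ 2" for a b
    by (simp add: power2_sum two_eq_zero)
  have step: "z ^ 2 ^ Suc i = (z ^ 2 ^ i) ^ 2" for z :: 'a
    by (simp only: power_Suc2 power_mult)
  show ?case
    by (simp only: step Suc.IH square)
qed simp

lemma frobenius_sum: "(sum f A) ^ 2 ^ i = (\<Sum>a\<in>A. (f a :: 'a) ^ 2 ^ i)"
  by (induction A rule: infinite_finite_induct) (simp_all add: frobenius_add)

lemma frobenius_inj:
  assumes "x ^ 2 ^ j = (y::'a) ^ 2 ^ j"
  shows "x = y"
proof -
  have "(x + y) ^ 2 ^ j = 0"
    using assms by (simp add: frobenius_add add_self_char_2)
  then show ?thesis
    by (simp add: add_eq_0_iff_char_2)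
qed

lemma abs_trace_add: "abs_trace j (x + y) = abs_trace j x + abs_trace j (y::'a)"
  by (simp add: abs_trace_def frobenius_add sum.distrib)

lemma abs_trace_square: "(abs_trace j x) ^ 2 = abs_trace j ((x::'a) ^ 2)"
proof -
  have "(abs_trace j x) ^ 2 = (\<Sum>i<j. (x ^ 2 ^ i) ^ 2)"
    using frobenius_sum[of "\<lambda>i. x ^ 2 ^ i" "{..<j}" 1] by (simp add: abs_trace_def)
  also have "\<dots> = abs_trace j (x ^ 2)"
    by (simp add: abs_trace_def power_mult[symmetric] mult.commute)
  finally show ?thesis .
qed

end

lemma two_power_not_cong_1:
  assumes "0 < i" and "i < k"
  shows "\<not> [2 ^ i = 1] (mod 2 ^ k - 1 :: nat)"
proof
  assume cong: "[2 ^ i = 1] (mod 2 ^ k - 1 :: nat)"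
  define X :: nat where "X = 2 ^ (k - 1)"
  have "2 ^ i \<le> X"
    unfolding X_def using assms by (intro power_increasing) simp_all
  moreover have "2 \<le> X"
    unfolding X_def using power_increasing[of 1 "k - 1" "2::nat"] assms by simp
  moreover have "2 ^ k = 2 * X"
    unfolding X_def using assms by (simp flip: power_Suc)
  ultimately have "2 ^ i < (2 ^ k - 1 :: nat)" and "1 < (2 ^ k - 1 :: nat)"
    by simp_all
  moreover have "1 < (2::nat) ^ i"
    using assms(1) by (intro one_less_power) simp_all
  ultimately show False
    using cong by (simp add: cong_def)
qed

lemma mult_two_power_mod_mersenne:
  fixes v :: nat
  assumes "v < 2 ^ k - 1" and "coprime v (2 ^ k - 1)" and "2 \<le> k"
  shows "v * 2 ^ i mod (2 ^ k - 1) \<noteq> 0"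
    and "0 < i \<Longrightarrow> i < k \<Longrightarrow> v * 2 ^ i mod (2 ^ k - 1) \<noteq> v"
proof -
  define N :: nat where "N = 2 ^ k - 1"
  have "(4::nat) \<le> 2 ^ k"
    using power_increasing[OF assms(3), of "2::nat"] by simp
  then have N_gt_1: "1 < N"
    unfolding N_def by linarith
  have "odd N"
    using assms(3) unfolding N_def by simp
  then have coprime_N_two_power: "coprime N (2 ^ i)"
    by simp
  show "v * 2 ^ i mod (2 ^ k - 1) \<noteq> 0"
  proof
    assume "v * 2 ^ i mod (2 ^ k - 1) = 0"
    then have "N dvd v * 2 ^ i"
      unfolding N_def by (simp add: mod_eq_0_iff_dvd)
    then have "N dvd v"
      using coprime_N_two_power by (simp add: coprime_dvd_mult_left_iff)
    then have "v = 0"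
      using assms(1) nat_dvd_not_less unfolding N_def by blast
    then show False
      using assms(2) N_gt_1 unfolding N_def by simp
  qed
  show "v * 2 ^ i mod (2 ^ k - 1) \<noteq> v" if "0 < i" "i < k"
  proof
    assume "v * 2 ^ i mod (2 ^ k - 1) = v"
    then have "[v * 2 ^ i = v * 1] (mod N)"
      using assms(1) unfolding N_def cong_def by simp
    then have "[2 ^ i = 1] (mod N)"
      using cong_mult_lcancel_nat[of v N "2 ^ i" 1] assms(2) unfolding N_def by simp
    then show False
      using two_power_not_cong_1[OF that] unfolding N_def by simp
  qed
qed

lemma two_power_cong_1_mersenne: "[2 ^ k = 1] (mod 2 ^ k - 1 :: nat)"
proof -
  have "(2::nat) ^ k = 1 + (2 ^ k - 1)"
    by simp
  then show ?thesis
    unfolding cong_def by (metis mod_add_self2)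
qed

lemma cong_two_power_if_mult_two_power_cong_1:
  fixes w :: nat
  assumes "[w * 2 ^ i = 1] (mod 2 ^ k - 1)" and "i \<le> k"
  shows "[w = 2 ^ (k - i)] (mod 2 ^ k - 1)"
proof -
  have "[w * 1 = w * 2 ^ k] (mod 2 ^ k - 1)"
    by (rule cong_mult[OF cong_refl cong_sym[OF two_power_cong_1_mersenne]])
  also have "w * 2 ^ k = (w * 2 ^ i) * 2 ^ (k - i)"
    using assms(2) by (simp add: mult.assoc flip: power_add)
  also have "[\<dots> = 1 * 2 ^ (k - i)] (mod 2 ^ k - 1)"
    using assms(1) by (rule cong_mult) simp
  finally show ?thesis
    by simp
qed

lemma exists_inverse_mod:
  fixes w n :: nat
  assumes "coprime w n" and "1 < n"
  obtains v where "v < n" and "coprime v n" and "[w * v = 1] (mod n)"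
proof -
  obtain v0 where "[w * v0 = 1] (mod n)"
    using cong_solve_coprime_nat[OF assms(1)] by auto
  then have inverse: "[w * (v0 mod n) = 1] (mod n)"
    unfolding cong_def by (simp add: mod_mult_right_eq)
  moreover have "coprime (v0 mod n) n"
    using cong_imp_coprime[OF cong_sym[OF inverse]] by simp
  moreover have "v0 mod n < n"
    using assms(2) by simp
  ultimately show ?thesis
    using that by blast
qed

definition trace_character :: "nat \<Rightarrow> 'a::field \<Rightarrow> int" where
  "trace_character k x = sgn_f2 (abs_trace k x)"

lemma trace_character_0 [simp]: "trace_character k 0 = 1"
  by (simp add: trace_character_def sgn_f2_def)

context
  fixes k :: nat
  assumes card_UNIV: "card (UNIV :: 'a::{field,finite} set) = 2 ^ k"
begin

lemma exponent_ge_1: "k \<ge> 1"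
proof (rule ccontr)
  assume "\<not> k \<ge> 1"
  then have "card (UNIV :: 'a set) = 1"
    using card_UNIV by simp
  then obtain z :: 'a where "UNIV = {z}"
    by (rule card_1_singletonE)
  then show False
    by (metis UNIV_I singletonD zero_neq_one)
qed

lemma char_two: "(2::'a) = 0"
  by (rule two_eq_zero_if_even_card) (use card_UNIV exponent_ge_1 in simp)

lemma power_two_power_k_eq_self: "(x::'a) ^ 2 ^ k = x"
  using power_card_eq_self card_UNIV by metis

lemma power_two_power_mult_k_eq_self: "(x::'a) ^ 2 ^ (k * n) = x"
proof (induction n)
  case (Suc n)
  have "x ^ 2 ^ (k * Suc n) = (x ^ 2 ^ k) ^ 2 ^ (k * n)"
    by (simp only: mult_Suc_right power_add power_mult)
  then show ?case
    using Suc.IH power_two_power_k_eq_self by simp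
qed simp

lemma subfield_pow2_eq_UNIV: "subfield_pow2 k = (UNIV :: 'a set)"
  by (simp add: subfield_pow2_def power_two_power_k_eq_self)

lemma nonzero_power_mod:
  assumes "(x::'a) \<noteq> 0"
  shows "x ^ n = x ^ (n mod (2 ^ k - 1))"
proof -
  have "x ^ (2 ^ k - 1) = 1"
    using nonzero_power_card_minus_one[OF assms] card_UNIV by simp
  then have "x ^ ((2 ^ k - 1) * (n div (2 ^ k - 1)) + n mod (2 ^ k - 1)) = x ^ (n mod (2 ^ k - 1))"
    by (simp only: power_add power_mult power_one mult_1)
  then show ?thesis
    by simp
qed

lemma abs_trace_power_two: "abs_trace k ((x::'a) ^ 2) = abs_trace k x"
proof -
  obtain k' where k': "k = Suc k'"
    using exponent_ge_1 by (cases k) auto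
  have "abs_trace k (x ^ 2) = (\<Sum>i<k. x ^ 2 ^ Suc i)"
    by (simp add: abs_trace_def power_mult[symmetric] mult.commute)
  also have "\<dots> = (\<Sum>i<k'. x ^ 2 ^ Suc i) + x ^ 2 ^ 0"
    using power_two_power_k_eq_self k' by simp
  also have "\<dots> = abs_trace k x"
    unfolding abs_trace_def k' sum.lessThan_Suc_shift by (simp add: add.commute)
  finally show ?thesis .
qed

lemma abs_trace_power_two_power: "abs_trace k ((x::'a) ^ 2 ^ j) = abs_trace k x"
proof (induction j)
  case (Suc j)
  have "x ^ 2 ^ Suc j = (x ^ 2 ^ j) ^ 2"
    by (simp only: power_Suc2 power_mult)
  then show ?case
    using abs_trace_power_two Suc.IH by simp
qed simp

lemma abs_trace_0_or_1: "abs_trace k (x::'a) = 0 \<or> abs_trace k x = 1"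
proof -
  have "abs_trace k x * abs_trace k x = abs_trace k x"
    using abs_trace_square[OF char_two] abs_trace_power_two by (simp add: power2_eq_square)
  then have "abs_trace k x * (abs_trace k x - 1) = 0"
    by (simp add: algebra_simps)
  then show ?thesis
    by simp
qed

lemma abs_trace_not_identically_0: "\<exists>x::'a. abs_trace k x \<noteq> 0"
proof (rule ccontr)
  assume none: "\<not> ?thesis"
  define p :: "'a poly" where "p = (\<Sum>i<k. monom 1 (2 ^ i))"
  have "poly p x = abs_trace k x" for x
    by (simp add: p_def abs_trace_def poly_sum poly_monom)
  moreover have "degree p < card (UNIV :: 'a set)"
  proof -
    have "degree p \<le> 2 ^ (k - 1)"
      unfolding p_def by (rule degree_sum_monom_le) (auto intro: power_increasing)
    also have "\<dots> < 2 ^ k"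
      using exponent_ge_1 by simp
    finally show ?thesis
      using card_UNIV by simp
  qed
  ultimately have "p = 0"
    using none poly_eq_0_if_vanishes by auto
  moreover have "coeff p (2 ^ (k - 1)) = 1"
  proof -
    have "coeff p (2 ^ (k - 1)) = (\<Sum>i<k. if i = k - 1 then 1 else 0)"
      unfolding p_def coeff_sum coeff_monom by (intro sum.cong) auto
    then show ?thesis
      using exponent_ge_1 by simp
  qed
  ultimately show False
    by simp
qed

lemma trace_character_add:
  "trace_character k (x + y) = trace_character k x * trace_character k (y::'a)"
  using abs_trace_0_or_1[of x] abs_trace_0_or_1[of y]
  by (auto simp: trace_character_def sgn_f2_def abs_trace_add[OF char_two] char_two)

lemma trace_character_power_two_power:
  "trace_character k ((x::'a) ^ 2 ^ j) = trace_character k x"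
  by (simp add: trace_character_def abs_trace_power_two_power)

lemma sum_trace_character:
  "(\<Sum>x\<in>UNIV. trace_character k (c * x)) = (if (c::'a) = 0 then 2 ^ k else 0)"
proof (cases "c = 0")
  case True
  then show ?thesis
    using card_UNIV by (simp add: trace_character_def sgn_f2_def)
next
  case False
  obtain x0 :: 'a where x0: "abs_trace k x0 \<noteq> 0"
    using abs_trace_not_identically_0 by blast
  have "(\<Sum>x\<in>UNIV. trace_character k (x::'a)) = (\<Sum>x\<in>UNIV. trace_character k (x + x0))"
    by (rule sum.reindex_bij_betw[OF bij_plus_right, symmetric])
  also have "\<dots> = - (\<Sum>x\<in>UNIV. trace_character k (x::'a))"
    using x0 by (simp add: trace_character_add sum_negf trace_character_def[of k x0] sgn_f2_def)
  finally have "(\<Sum>x\<in>UNIV. trace_character k (x::'a)) = 0"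
    by linarith
  moreover have "(\<Sum>x\<in>UNIV. trace_character k (c * x)) = (\<Sum>x\<in>UNIV. trace_character k (x::'a))"
    by (rule sum.reindex_bij_betw[OF bij_mult_left_nonzero[OF False]])
  ultimately show ?thesis
    using False by (simp only: if_False)
qed

lemma sum_nonzero_trace_character:
  "(\<Sum>x\<in>UNIV - {0}. trace_character k (c * x)) = (if (c::'a) = 0 then 2 ^ k else 0) - 1"
proof -
  have "(\<Sum>x\<in>UNIV. trace_character k (c * x)) = trace_character k (c * 0) + (\<Sum>x\<in>UNIV - {0}. trace_character k (c * x))"
    by (rule sum.remove) simp_all
  then show ?thesis
    by (simp add: sum_trace_character)
qed

lemma abs_trace_power_eq_sum_mod:
  assumes "\<And>i. v * 2 ^ i mod (2 ^ k - 1) \<noteq> 0"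
  shows "abs_trace k ((z::'a) ^ v) = (\<Sum>i<k. z ^ (v * 2 ^ i mod (2 ^ k - 1)))"
proof (cases "z = 0")
  case True
  have "v \<noteq> 0"
    using assms[of 0] by (cases "v = 0") simp_all
  then show ?thesis
    using True assms by (auto simp: power_0_left intro: sum.neutral)
next
  case False
  have "(z ^ v) ^ 2 ^ i = z ^ (v * 2 ^ i mod (2 ^ k - 1))" for i
    using nonzero_power_mod[OF False, of "v * 2 ^ i"] by (simp add: power_mult)
  then show ?thesis
    by (simp add: abs_trace_def)
qed

lemma two_power_if_trace_identity:
  assumes "2 \<le> k" and "v < 2 ^ k - 1" and "coprime v (2 ^ k - 1)"
    and trace_eq: "\<And>z. z \<noteq> 0 \<Longrightarrow> abs_trace k (c * z) = abs_trace k ((z::'a) ^ v)"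
  shows "\<exists>i<k. v = 2 ^ i"
proof (rule ccontr)
  assume not_two_power: "\<not> (\<exists>i<k. v = 2 ^ i)"
  define e where "e i = v * 2 ^ i mod (2 ^ k - 1)" for i
  have e_nonzero: "e i \<noteq> 0" for i
    unfolding e_def by (rule mult_two_power_mod_mersenne(1)[OF assms(2,3,1)])
  have e_ne: "e i \<noteq> v" if "0 < i" "i < k" for i
    unfolding e_def by (rule mult_two_power_mod_mersenne(2)[OF assms(2,3,1) that])
  have e_le: "e i \<le> 2 ^ k - 1" for i
    unfolding e_def using assms(2) by (intro mod_le_divisor) linarith
  have e_0: "e 0 = v"
    using assms(2) by (simp add: e_def)
  have "v \<noteq> 0"
    using e_nonzero[of 0] e_0 by simp
  \<comment> \<open>p vanishes on the field, yet among the exponents of its second sum only e 0 equals v\<close>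
  define p :: "'a poly" where "p = (\<Sum>i<k. monom (c ^ 2 ^ i) (2 ^ i)) + (\<Sum>i<k. monom 1 (e i))"
  have "poly p z = abs_trace k (c * z) + abs_trace k (z ^ v)" for z
    using abs_trace_power_eq_sum_mod[of v z] e_nonzero
    by (simp add: p_def e_def poly_sum poly_monom abs_trace_def power_mult_distrib)
  then have "poly p z = 0" for z
    using trace_eq[of z] \<open>v \<noteq> 0\<close>
    by (cases "z = 0") (simp_all add: power_0_left add_self_char_2[OF char_two])
  moreover have "degree p < card (UNIV :: 'a set)"
  proof -
    have "(2::nat) ^ i \<le> 2 ^ k - 1" if "i < k" for i
      using power_strict_increasing[OF that, of "2::nat"] by linarith
    then have "degree p \<le> 2 ^ k - 1"
      unfolding p_def using e_le by (intro degree_add_le degree_sum_monom_le) auto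
    moreover have "(0::nat) < 2 ^ k"
      by simp
    ultimately show ?thesis
      using card_UNIV by linarith
  qed
  ultimately have "p = 0"
    by (rule poly_eq_0_if_vanishes)
  moreover have "coeff p v = 1"
  proof -
    have "coeff p v = (\<Sum>i<k. if 2 ^ i = v then c ^ 2 ^ i else 0) + (\<Sum>i<k. if e i = v then 1 else 0)"
      by (simp add: p_def coeff_sum)
    also have "(\<Sum>i<k. if 2 ^ i = v then c ^ 2 ^ i else 0) = 0"
      using not_two_power by (intro sum.neutral) auto
    also have "(\<Sum>i<k. if e i = v then (1::'a) else 0) = (\<Sum>i<k. if i = 0 then 1 else 0)"
      using e_0 e_ne by (intro sum.cong) auto
    finally show ?thesis
      using assms(1) by simp
  qed
  ultimately show False
    by simp
qed

lemma cong_two_power_if_trace_identity: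
  assumes "2 \<le> k" and "coprime w (2 ^ k - 1)"
    and trace_eq: "\<And>y. y \<noteq> 0 \<Longrightarrow> abs_trace k (c * (y::'a) ^ w) = abs_trace k y"
  shows "\<exists>t. [w = 2 ^ t] (mod 2 ^ k - 1)"
proof -
  have "(4::nat) \<le> 2 ^ k"
    using power_increasing[OF assms(1), of "2::nat"] by simp
  then have "1 < (2 ^ k - 1 :: nat)"
    by linarith
  then obtain v where "v < 2 ^ k - 1" and "coprime v (2 ^ k - 1)"
    and inverse: "[w * v = 1] (mod 2 ^ k - 1)"
    using exists_inverse_mod[OF assms(2)] by blast
  have "abs_trace k (c * z) = abs_trace k (z ^ v)" if "z \<noteq> 0" for z
  proof -
    have "(z ^ v) ^ w = z ^ (w * v mod (2 ^ k - 1))"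
      using nonzero_power_mod[OF that, of "w * v"] by (simp add: power_mult mult.commute)
    also have "w * v mod (2 ^ k - 1) = 1"
      using inverse \<open>1 < 2 ^ k - 1\<close> by (simp add: cong_def)
    finally show ?thesis
      using trace_eq[of "z ^ v"] that by simp
  qed
  then obtain i where "i < k" and "v = 2 ^ i"
    using two_power_if_trace_identity[OF assms(1) \<open>v < 2 ^ k - 1\<close> \<open>coprime v (2 ^ k - 1)\<close>]
    by blast
  then show ?thesis
    using cong_two_power_if_mult_two_power_cong_1[of w i k] inverse by auto
qed

end

lemma walsh_indicator:
  fixes T :: "('a::{field,finite} \<times> 'a) set"
  assumes "T \<subseteq> UNIV \<times> subfield_pow2 m"
  shows "walsh k m (\<lambda>p. p \<in> T) a b =
    (\<Sum>(x, y)\<in>UNIV \<times> subfield_pow2 m. trace_character k (a * x) * trace_character m (b * y))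
    - 2 * (\<Sum>(x, y)\<in>T. trace_character k (a * x) * trace_character m (b * y))"
proof -
  define \<psi> where "\<psi> = (\<lambda>(x, y). trace_character k (a * x) * trace_character m (b * (y::'a)))"
  have "walsh k m (\<lambda>p. p \<in> T) a b = (\<Sum>p\<in>UNIV \<times> subfield_pow2 m. sgn_bool (p \<in> T) * \<psi> p)"
    by (simp add: walsh_def \<psi>_def sum.cartesian_product trace_character_def case_prod_beta mult.assoc)
  also have "\<dots> = (\<Sum>p\<in>UNIV \<times> subfield_pow2 m. \<psi> p - 2 * (if p \<in> T then \<psi> p else 0))"
    by (intro sum.cong) (auto simp: sgn_bool_def)
  also have "\<dots> = (\<Sum>p\<in>UNIV \<times> subfield_pow2 m. \<psi> p)
      - 2 * (\<Sum>p\<in>UNIV \<times> subfield_pow2 m. if p \<in> T then \<psi> p else 0)"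
    by (simp add: sum_subtractf sum_distrib_left)
  also have "(\<Sum>p\<in>UNIV \<times> subfield_pow2 m. if p \<in> T then \<psi> p else 0) = (\<Sum>p\<in>T. \<psi> p)"
    using assms by (subst sum.inter_restrict[symmetric]) (simp_all add: Int_absorb1)
  finally show ?thesis
    by (simp add: \<psi>_def)
qed

lemma zero_in_subfield_pow2: "0 \<in> subfield_pow2 m"
  by (simp add: subfield_pow2_def)

locale primitive_binary_field =
  fixes \<alpha> :: "'a::{field,finite}" and k :: nat
  assumes card_UNIV: "card (UNIV :: 'a set) = 2 ^ k"
    and primitive: "primitive_element \<alpha>"
begin

abbreviation chi :: "'a \<Rightarrow> int" where
  "chi \<equiv> trace_character k"

definition N :: nat where
  "N = 2 ^ k - 1"

definition h :: nat where
  "h = 2 ^ (k - 1)"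

lemma two_power_eq_N: "2 ^ k = N + 1"
  by (simp add: N_def)

lemma two_h_eq: "2 * h = 2 ^ k"
  using exponent_ge_1[OF card_UNIV] by (simp add: h_def flip: power_Suc)

lemma two_int_h_eq: "2 * int h = 2 ^ k"
  using arg_cong[OF two_h_eq, of int] by simp

lemma int_N: "int N = 2 ^ k - 1"
  by (simp add: N_def)

lemma alpha_nonzero: "\<alpha> \<noteq> 0"
  using primitive unfolding primitive_element_def by (metis Diff_iff insertI1 rangeI power_one_right)

lemma nonzero_power_N: "(y::'a) \<noteq> 0 \<Longrightarrow> y ^ N = 1"
  using nonzero_power_card_minus_one[of y, unfolded card_UNIV] by (simp add: N_def)

lemma alpha_power_N: "\<alpha> ^ N = 1"
  by (rule nonzero_power_N[OF alpha_nonzero])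

lemma alpha_power_ne_1:
  assumes "0 < d" and "d < N"
  shows "\<alpha> ^ d \<noteq> 1"
proof
  assume "\<alpha> ^ d = 1"
  have alpha_power_mod: "\<alpha> ^ i = \<alpha> ^ (i mod d)" for i
  proof -
    have "\<alpha> ^ i = (\<alpha> ^ d) ^ (i div d) * \<alpha> ^ (i mod d)"
      by (simp flip: power_mult power_add)
    then show ?thesis
      using \<open>\<alpha> ^ d = 1\<close> by simp
  qed
  have "UNIV - {0} \<subseteq> (\<lambda>i. \<alpha> ^ i) ` {..<d}"
  proof
    fix x :: 'a
    assume "x \<in> UNIV - {0}"
    then obtain i where "x = \<alpha> ^ i"
      using primitive unfolding primitive_element_def by blast
    then show "x \<in> (\<lambda>i. \<alpha> ^ i) ` {..<d}"
      using alpha_power_mod[of i] assms(1) by auto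
  qed
  then have "card (UNIV - {0::'a}) \<le> card ((\<lambda>i. \<alpha> ^ i) ` {..<d})"
    by (intro card_mono) simp_all
  also have "\<dots> \<le> d"
    using card_image_le[of "{..<d}" "\<lambda>i. \<alpha> ^ i"] by simp
  finally show False
    using assms(2) card_UNIV by (simp add: card_Diff_singleton N_def)
qed

lemma inj_on_alpha_power:
  assumes "L \<le> N"
  shows "inj_on (\<lambda>i. \<alpha> ^ i) {a..<a + L}"
proof (rule linorder_inj_onI')
  fix i j
  assume "i \<in> {a..<a + L}" and "j \<in> {a..<a + L}" and "i < j"
  then have "\<alpha> ^ (j - i) \<noteq> 1"
    using assms by (intro alpha_power_ne_1) auto
  moreover have "\<alpha> ^ j = \<alpha> ^ i * \<alpha> ^ (j - i)"
    using \<open>i < j\<close> by (simp flip: power_add)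
  ultimately show "\<alpha> ^ i \<noteq> \<alpha> ^ j"
    using alpha_nonzero by auto
qed

lemma bij_betw_alpha_power: "bij_betw (\<lambda>i. \<alpha> ^ i) {a..<a + N} (UNIV - {0})"
proof -
  have inj: "inj_on (\<lambda>i. \<alpha> ^ i) {a..<a + N}"
    by (rule inj_on_alpha_power) simp
  moreover have "(\<lambda>i. \<alpha> ^ i) ` {a..<a + N} = UNIV - {0}"
  proof (rule card_subset_eq)
    show "(\<lambda>i. \<alpha> ^ i) ` {a..<a + N} \<subseteq> UNIV - {0}"
      using alpha_nonzero by auto
    show "card ((\<lambda>i. \<alpha> ^ i) ` {a..<a + N}) = card (UNIV - {0::'a})"
      using card_image[OF inj] card_UNIV by (simp add: card_Diff_singleton N_def)
  qed simp
  ultimately show ?thesis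
    by (simp add: bij_betw_def)
qed

lemma h_pos: "1 \<le> h"
  by (simp add: h_def)

lemma h_le_N: "h \<le> N"
  using two_h_eq two_power_eq_N h_pos by linarith

lemma Delta_eq_image: "Delta \<alpha> s k = (\<lambda>i. \<alpha> ^ i) ` {s..<s + h}"
proof -
  have "i \<le> s + 2 ^ (k - 1) - 1 \<longleftrightarrow> i < s + h" for i
    using h_pos unfolding h_def by linarith
  then show ?thesis
    unfolding Delta_def by auto
qed

lemma sum_Delta: "(\<Sum>\<gamma>\<in>Delta \<alpha> s k. F \<gamma>) = (\<Sum>i = s..<s + h. F (\<alpha> ^ i))"
  by (simp add: Delta_eq_image sum.reindex[OF inj_on_alpha_power[OF h_le_N]])

lemma card_Delta: "card (Delta \<alpha> s k) = h"
  using sum_Delta[of "\<lambda>_. 1::nat" s] by simp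

definition supp_f :: "nat \<Rightarrow> int \<Rightarrow> nat \<Rightarrow> ('a \<times> 'a) set" where
  "supp_f m u s = {(\<gamma> * y powi u, y) | \<gamma> y. y \<in> subfield_pow2 m - {0} \<and> \<gamma> \<in> Delta \<alpha> s k}"

lemma supp_f_subset: "supp_f m u s \<subseteq> UNIV \<times> subfield_pow2 m"
  by (auto simp: supp_f_def)

lemma sum_supp_f:
  "(\<Sum>p\<in>supp_f m u s. g p) = (\<Sum>\<gamma>\<in>Delta \<alpha> s k. \<Sum>y\<in>subfield_pow2 m - {0}. g (\<gamma> * y powi u, y))"
proof -
  have image: "supp_f m u s = (\<lambda>(\<gamma>, y). (\<gamma> * y powi u, y)) ` (Delta \<alpha> s k \<times> (subfield_pow2 m - {0}))"
    by (auto simp: supp_f_def)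
  have inj: "inj_on (\<lambda>(\<gamma>, y). (\<gamma> * y powi u, y)) (Delta \<alpha> s k \<times> (subfield_pow2 m - {0}))"
    by (auto simp: inj_on_def power_int_not_zero)
  show ?thesis
    unfolding image sum.reindex[OF inj] sum.cartesian_product by (simp add: case_prod_beta)
qed

lemma walsh_supp_f_0_0: "walsh k m (\<lambda>p. p \<in> supp_f m u s) 0 0 = 2 ^ k"
proof -
  define e where "e = card (subfield_pow2 m :: 'a set)"
  have "1 \<le> e"
    using zero_in_subfield_pow2 card_gt_0_iff[of "subfield_pow2 m :: 'a set"] by (force simp: e_def)
  have "card (supp_f m u s) = h * (e - 1)"
    using sum_supp_f[where g="\<lambda>_. 1::nat"]
    by (simp add: card_Delta e_def card_Diff_singleton zero_in_subfield_pow2)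
  then have "walsh k m (\<lambda>p. p \<in> supp_f m u s) 0 0 = int (2 ^ k * e) - 2 * int (h * (e - 1))"
    using walsh_indicator[OF supp_f_subset] card_UNIV
    by (simp add: trace_character_def sgn_f2_def card_cartesian_product e_def)
  also have "\<dots> = 2 ^ k"
    using \<open>1 \<le> e\<close> by (simp add: algebra_simps flip: two_int_h_eq)
  finally show ?thesis .
qed

lemma nonzero_powi_eq_power_mod:
  assumes "(y::'a) \<noteq> 0"
  shows "y powi u = y ^ nat (u mod int N)"
proof -
  have N_pos: "0 < int N"
    using h_pos h_le_N by simp
  have "y powi u = y powi (u mod int N + int N * (u div int N))"
    by simp
  also have "\<dots> = y powi (u mod int N) * y powi (int N * (u div int N))"
    by (rule power_int_add) (simp add: assms)
  also have "y powi (int N * (u div int N)) = (y powi int N) powi (u div int N)"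
    by (rule power_int_mult)
  also have "y powi int N = 1"
    using nonzero_power_N[OF assms] by simp
  also have "y powi (u mod int N) = y powi int (nat (u mod int N))"
    using N_pos by simp
  also have "\<dots> = y ^ nat (u mod int N)"
    by (rule power_int_of_nat)
  finally show ?thesis
    by simp
qed

definition delta_sum :: "int \<Rightarrow> nat \<Rightarrow> 'a \<Rightarrow> 'a \<Rightarrow> int" where
  "delta_sum u s a b = (\<Sum>\<gamma>\<in>Delta \<alpha> s k. \<Sum>y\<in>UNIV - {0}. chi (a * \<gamma> * y powi u + b * y))"

lemma walsh_supp_f_diagonal:
  "walsh k k (\<lambda>p. p \<in> supp_f k u s) a b = (if a = 0 then 2 ^ k else - 2 * delta_sum u s a b)"
proof -
  have "walsh k k (\<lambda>p. p \<in> supp_f k u s) a b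
      = (\<Sum>(x, y)\<in>UNIV \<times> UNIV. chi (a * x) * chi (b * y))
        - 2 * (\<Sum>(x, y)\<in>supp_f k u s. chi (a * x) * chi (b * y))"
    using walsh_indicator[OF supp_f_subset[of k u s]] by (simp add: subfield_pow2_eq_UNIV[OF card_UNIV])
  also have "(\<Sum>(x, y)\<in>UNIV \<times> UNIV. chi (a * x) * chi (b * y))
      = (\<Sum>x\<in>UNIV. chi (a * x)) * (\<Sum>y\<in>UNIV. chi (b * y))"
    by (simp add: sum_product sum.cartesian_product)
  also have "(\<Sum>(x, y)\<in>supp_f k u s. chi (a * x) * chi (b * y)) = delta_sum u s a b"
    unfolding sum_supp_f delta_sum_def subfield_pow2_eq_UNIV[OF card_UNIV]
    by (simp add: trace_character_add[OF card_UNIV] mult.assoc)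
  finally have split: "walsh k k (\<lambda>p. p \<in> supp_f k u s) a b
      = (\<Sum>x\<in>UNIV. chi (a * x)) * (\<Sum>y\<in>UNIV. chi (b * y)) - 2 * delta_sum u s a b" .
  show ?thesis
  proof (cases "a = 0")
    case True
    have "delta_sum u s a b = int h * ((\<Sum>y\<in>UNIV. chi (b * y)) - 1)"
      using True
      by (simp add: delta_sum_def sum_nonzero_trace_character[OF card_UNIV]
          sum_trace_character[OF card_UNIV] card_Delta)
    with split True show ?thesis
      using card_UNIV by (simp add: algebra_simps flip: two_int_h_eq)
  next
    case False
    with split show ?thesis
      by (simp add: sum_trace_character[OF card_UNIV])
  qed
qed

lemma bent_iff_abs_delta_sum:
  "is_bent k k (\<lambda>p. p \<in> supp_f k u s) \<longleftrightarrow> (\<forall>a b. a \<noteq> 0 \<longrightarrow> \<bar>delta_sum u s a b\<bar> = h)"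
proof -
  have "(2::int) ^ ((k + k) div 2) = 2 * int h"
    using two_int_h_eq by simp
  then show ?thesis
    unfolding is_bent_def subfield_pow2_eq_UNIV[OF card_UNIV] walsh_supp_f_diagonal
    by (auto simp: abs_mult)
qed

(* Raising to 2 ^ (k * t - t) undoes y \<mapsto> y ^ 2 ^ t, since 2 ^ (k * t) acts trivially. *)
lemma trace_character_powi_two_power:
  assumes "(y::'a) \<noteq> 0" and "[u = 2 ^ t] (mod int N)"
  shows "chi (c * y powi u) = chi (c ^ 2 ^ (k * t - t) * y)"
proof -
  have "u mod int N = int (2 ^ t mod N)"
    using assms(2) unfolding cong_def by (simp add: of_nat_mod)
  then have "nat (u mod int N) = 2 ^ t mod N"
    by simp
  then have "y powi u = y ^ 2 ^ t"
    using nonzero_powi_eq_power_mod[OF assms(1)] nonzero_power_mod[OF card_UNIV assms(1), of "2 ^ t"]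
    by (simp add: N_def)
  have "(2::nat) ^ t * 2 ^ (k * t - t) = 2 ^ (k * t)"
    using exponent_ge_1[OF card_UNIV] by (simp flip: power_add)
  then have "(y ^ 2 ^ t) ^ 2 ^ (k * t - t) = y"
    using power_two_power_mult_k_eq_self[OF card_UNIV, of y t] by (simp only: power_mult[symmetric])
  then have twist: "(c * y ^ 2 ^ t) ^ 2 ^ (k * t - t) = c ^ 2 ^ (k * t - t) * y"
    by (simp only: power_mult_distrib)
  have "chi (c * y powi u) = chi (c * y ^ 2 ^ t)"
    by (simp only: \<open>y powi u = y ^ 2 ^ t\<close>)
  also have "\<dots> = chi ((c * y ^ 2 ^ t) ^ 2 ^ (k * t - t))"
    by (rule trace_character_power_two_power[OF card_UNIV, symmetric])
  also have "\<dots> = chi (c ^ 2 ^ (k * t - t) * y)"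
    by (simp only: twist)
  finally show ?thesis .
qed

lemma delta_sum_two_power:
  assumes "[u = 2 ^ t] (mod int N)"
  shows "delta_sum u s a b = 2 ^ k * int (card {\<gamma> \<in> Delta \<alpha> s k. (a * \<gamma>) ^ 2 ^ (k * t - t) = b}) - int h"
proof -
  define j where "j = k * t - t"
  have twist: "chi (a * \<gamma> * y powi u + b * y) = chi (((a * \<gamma>) ^ 2 ^ j + b) * y)"
    if "y \<noteq> 0" for \<gamma> y
  proof -
    have "chi (a * \<gamma> * y powi u + b * y) = chi (a * \<gamma> * y powi u) * chi (b * y)"
      by (rule trace_character_add[OF card_UNIV])
    also have "chi (a * \<gamma> * y powi u) = chi ((a * \<gamma>) ^ 2 ^ j * y)"
      unfolding j_def by (rule trace_character_powi_two_power[OF that assms])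
    also have "chi ((a * \<gamma>) ^ 2 ^ j * y) * chi (b * y) = chi ((a * \<gamma>) ^ 2 ^ j * y + b * y)"
      by (rule trace_character_add[OF card_UNIV, symmetric])
    finally show ?thesis
      by (simp only: distrib_right)
  qed
  have "delta_sum u s a b = (\<Sum>\<gamma>\<in>Delta \<alpha> s k. \<Sum>y\<in>UNIV - {0}. chi (((a * \<gamma>) ^ 2 ^ j + b) * y))"
    unfolding delta_sum_def by (intro sum.cong refl) (simp add: twist)
  also have "\<dots> = (\<Sum>\<gamma>\<in>Delta \<alpha> s k. (if (a * \<gamma>) ^ 2 ^ j = b then 2 ^ k else 0) - 1)"
    by (simp add: sum_nonzero_trace_character[OF card_UNIV] add_eq_0_iff_char_2[OF char_two[OF card_UNIV]])
  also have "\<dots> = (\<Sum>\<gamma>\<in>{\<gamma> \<in> Delta \<alpha> s k. (a * \<gamma>) ^ 2 ^ j = b}. 2 ^ k) - int h"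
    by (simp add: sum_subtractf card_Delta flip: sum.inter_filter)
  finally show ?thesis
    by (simp add: j_def)
qed

lemma abs_delta_sum_two_power:
  assumes "a \<noteq> 0" and "[u = 2 ^ t] (mod int N)"
  shows "\<bar>delta_sum u s a b\<bar> = h"
proof -
  define P where "P = {\<gamma> \<in> Delta \<alpha> s k. (a * \<gamma>) ^ 2 ^ (k * t - t) = b}"
  have "\<gamma>1 = \<gamma>2" if "\<gamma>1 \<in> P" and "\<gamma>2 \<in> P" for \<gamma>1 \<gamma>2
  proof -
    have "(a * \<gamma>1) ^ 2 ^ (k * t - t) = (a * \<gamma>2) ^ 2 ^ (k * t - t)"
      using that unfolding P_def by simp
    then have "a * \<gamma>1 = a * \<gamma>2"
      by (rule frobenius_inj[OF char_two[OF card_UNIV]])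
    then show ?thesis
      using assms(1) by simp
  qed
  then have "card P \<le> 1"
    using card_le_Suc0_iff_eq[of P] by simp
  moreover have "delta_sum u s a b = 2 * int h * int (card P) - int h"
    using delta_sum_two_power[OF assms(2), of s a b] unfolding P_def two_int_h_eq .
  ultimately show ?thesis
    by (cases "card P") simp_all
qed

definition binomial_sum :: "int \<Rightarrow> 'a \<Rightarrow> int" where
  "binomial_sum u c = (\<Sum>y\<in>UNIV - {0}. chi (c * y powi u + y))"

lemma delta_sum_alpha_power:
  "delta_sum u s (\<alpha> ^ d) 1 = (\<Sum>l = s + d..<s + d + h. binomial_sum u (\<alpha> ^ l))"
proof -
  have "delta_sum u s (\<alpha> ^ d) 1 = (\<Sum>\<gamma>\<in>Delta \<alpha> s k. binomial_sum u (\<alpha> ^ d * \<gamma>))"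
    by (simp add: delta_sum_def binomial_sum_def)
  also have "\<dots> = (\<Sum>i = s..<s + h. binomial_sum u (\<alpha> ^ (i + d)))"
    unfolding sum_Delta by (simp add: power_add mult.commute)
  also have "\<dots> = (\<Sum>l = s + d..<s + h + d. binomial_sum u (\<alpha> ^ l))"
    by (rule sum.shift_bounds_nat_ivl[symmetric])
  finally show ?thesis
    by (simp add: ac_simps)
qed

lemma sum_binomial_sum: "(\<Sum>c\<in>UNIV - {0}. binomial_sum u c) = 1"
proof -
  have "(\<Sum>c\<in>UNIV - {0}. binomial_sum u c) = (\<Sum>y\<in>UNIV - {0}. \<Sum>c\<in>UNIV - {0}. chi (c * y powi u + y))"
    unfolding binomial_sum_def by (rule sum.swap)
  also have "\<dots> = (\<Sum>y\<in>UNIV - {0}. chi y * (\<Sum>c\<in>UNIV - {0}. chi (y powi u * c)))"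
    by (intro sum.cong refl) (simp add: trace_character_add[OF card_UNIV] sum_distrib_left mult.commute)
  also have "\<dots> = (\<Sum>y\<in>UNIV - {0}. - chi (1 * y))"
    by (intro sum.cong refl) (simp add: sum_nonzero_trace_character[OF card_UNIV] power_int_not_zero)
  also have "\<dots> = 1"
    by (simp only: sum_negf sum_nonzero_trace_character[OF card_UNIV]) simp
  finally show ?thesis .
qed

(* As 2 h = N + 1, the two windows cover every nonzero element once and \<alpha> ^ d twice. *)
lemma window_sum_pair:
  "(\<Sum>l = d..<d + h. binomial_sum u (\<alpha> ^ l)) + (\<Sum>l = d + h..<d + h + h. binomial_sum u (\<alpha> ^ l))
    = binomial_sum u (\<alpha> ^ d) + 1"
proof -
  have bound: "d + h + h = Suc d + N"
    using two_h_eq two_power_eq_N by simp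
  have "(\<Sum>l = d..<d + h. binomial_sum u (\<alpha> ^ l)) + (\<Sum>l = d + h..<d + h + h. binomial_sum u (\<alpha> ^ l))
      = (\<Sum>l = d..<d + h + h. binomial_sum u (\<alpha> ^ l))"
    by (rule sum.atLeastLessThan_concat) simp_all
  also have "\<dots> = (\<Sum>l = d..<Suc d + N. binomial_sum u (\<alpha> ^ l))"
    by (simp only: bound)
  also have "(\<Sum>l = d..<Suc d + N. binomial_sum u (\<alpha> ^ l))
      = binomial_sum u (\<alpha> ^ d) + (\<Sum>l = Suc d..<Suc d + N. binomial_sum u (\<alpha> ^ l))"
    by (rule sum.atLeast_Suc_lessThan) simp
  also have "(\<Sum>l = Suc d..<Suc d + N. binomial_sum u (\<alpha> ^ l)) = (\<Sum>c\<in>UNIV - {0}. binomial_sum u c)"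
    by (rule sum.reindex_bij_betw[OF bij_betw_alpha_power])
  also have "\<dots> = 1"
    by (rule sum_binomial_sum)
  finally show ?thesis .
qed

lemma binomial_sum_cases:
  assumes bent: "\<And>a. a \<noteq> 0 \<Longrightarrow> \<bar>delta_sum u s a 1\<bar> = h" and "c \<noteq> 0"
  shows "binomial_sum u c = N \<or> binomial_sum u c \<le> -1"
proof -
  have window: "\<bar>\<Sum>l = d..<d + h. binomial_sum u (\<alpha> ^ l)\<bar> = h" if "s \<le> d" for d
    using bent[of "\<alpha> ^ (d - s)"] delta_sum_alpha_power[of u s "d - s"] that alpha_nonzero by simp
  obtain j where "c = \<alpha> ^ j"
    using primitive \<open>c \<noteq> 0\<close> unfolding primitive_element_def by blast
  \<comment> \<open>shift the exponent of c past s, so that the windows at d and d + h are values of delta_sum\<close>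
  define d where "d = j + N * s"
  have "\<alpha> ^ d = c"
    using \<open>c = \<alpha> ^ j\<close> alpha_power_N by (simp add: d_def power_add power_mult)
  moreover have "s \<le> d"
  proof -
    have "1 \<le> N"
      using h_pos h_le_N by simp
    then have "1 * s \<le> N * s"
      by (rule mult_le_mono1)
    then show ?thesis
      unfolding d_def by linarith
  qed
  ultimately have "(\<Sum>l = d..<d + h. binomial_sum u (\<alpha> ^ l)) + (\<Sum>l = d + h..<d + h + h. binomial_sum u (\<alpha> ^ l))
      = binomial_sum u c + 1"
    and "\<bar>\<Sum>l = d..<d + h. binomial_sum u (\<alpha> ^ l)\<bar> = h"
    and "\<bar>\<Sum>l = d + h..<d + h + h. binomial_sum u (\<alpha> ^ l)\<bar> = h"
    using window_sum_pair[where d=d and u=u] window[of d] window[of "d + h"] by simp_all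
  moreover have "2 * int h = int N + 1"
    using two_int_h_eq int_N by simp
  \<comment> \<open>both window sums are h or -h, so binomial_sum u c + 1 is one of N + 1, 0, -(N + 1)\<close>
  ultimately show ?thesis
    by linarith
qed

lemma exists_binomial_sum_eq_N:
  assumes "\<And>a. a \<noteq> 0 \<Longrightarrow> \<bar>delta_sum u s a 1\<bar> = h"
  shows "\<exists>c. binomial_sum u c = N"
proof (rule ccontr)
  assume "\<nexists>c. binomial_sum u c = N"
  then have "binomial_sum u c \<le> -1" if "c \<in> UNIV - {0}" for c
    using binomial_sum_cases[OF assms] that by blast
  then have "(\<Sum>c\<in>UNIV - {0}. binomial_sum u c) \<le> (\<Sum>c\<in>UNIV - {0::'a}. -1)"
    by (rule sum_mono)
  also have "\<dots> = - int N"
    using card_UNIV by (simp add: card_Diff_singleton N_def)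
  finally show False
    using sum_binomial_sum h_pos h_le_N by simp
qed

lemma trace_identity_if_binomial_sum_eq_N:
  assumes "binomial_sum u c = N" and "y \<noteq> 0"
  shows "abs_trace k (c * y powi u) = abs_trace k y"
proof -
  have "(\<Sum>y\<in>UNIV - {0}. 1 - chi (c * y powi u + y)) = 0"
    using assms(1) card_UNIV by (simp add: binomial_sum_def sum_subtractf card_Diff_singleton N_def)
  moreover have "\<forall>y\<in>UNIV - {0}. 0 \<le> 1 - chi (c * y powi u + y)"
    by (simp add: trace_character_def sgn_f2_def)
  ultimately have "chi (c * y powi u + y) = 1"
    using assms(2) sum_nonneg_eq_0_iff[of "UNIV - {0}" "\<lambda>y. 1 - chi (c * y powi u + y)"] by simp
  then have "abs_trace k (c * y powi u) + abs_trace k y = 0"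
    by (simp add: trace_character_def sgn_f2_def abs_trace_add[OF char_two[OF card_UNIV]] split: if_splits)
  then show ?thesis
    by (simp add: add_eq_0_iff_char_2[OF char_two[OF card_UNIV]])
qed

lemma two_power_if_bent:
  assumes "2 \<le> k" and "coprime u (int N)" and "is_bent k k (\<lambda>p. p \<in> supp_f k u s)"
  shows "\<exists>t. [u = 2 ^ t] (mod int N)"
proof -
  obtain c where c: "binomial_sum u c = N"
    using exists_binomial_sum_eq_N assms(3) bent_iff_abs_delta_sum by blast
  define w where "w = nat (u mod int N)"
  have "0 < int N"
    using h_pos h_le_N by simp
  then have w_eq: "int w = u mod int N"
    by (simp add: w_def)
  have "coprime (u mod int N) (int N)"
    using assms(2) \<open>0 < int N\<close> by simp
  then have "coprime w N"
    by (simp flip: w_eq)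
  have "abs_trace k (c * y ^ w) = abs_trace k y" if "y \<noteq> 0" for y
    using trace_identity_if_binomial_sum_eq_N[OF c that] nonzero_powi_eq_power_mod[OF that]
    by (simp add: w_def)
  then obtain t where "[w = 2 ^ t] (mod N)"
    using cong_two_power_if_trace_identity[OF card_UNIV assms(1)] \<open>coprime w N\<close>
    unfolding N_def by blast
  then have "[int w = 2 ^ t] (mod int N)"
    using cong_int_iff[of w "2 ^ t" N] by simp
  moreover have "[u = int w] (mod int N)"
    by (simp add: w_eq cong_def)
  ultimately show ?thesis
    using cong_trans by blast
qed

lemma bent_iff_two_power:
  assumes "2 \<le> k" and "coprime u (2 ^ k - 1)"
  shows "is_bent k k (\<lambda>p. p \<in> supp_f k u s) \<longleftrightarrow> (\<exists>t. [u = 2 ^ t] (mod 2 ^ k - 1))"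
proof -
  have "coprime u (int N)"
    using assms(2) int_N by simp
  then show ?thesis
    unfolding int_N[symmetric]
    using two_power_if_bent[OF assms(1)] abs_delta_sum_two_power bent_iff_abs_delta_sum by blast
qed

end

theorem corollary1:
  fixes \<alpha> :: "'a::{field,finite}" and r m s :: nat and u :: int
  assumes "odd r" and "m \<ge> 3" and "card (UNIV :: 'a set) = 2 ^ (r * m)"
    and "coprime u (2 ^ m - 1)" and "primitive_element \<alpha>"
    and "s \<le> 2 ^ (r * m) - 2"
  shows "is_bent (r * m) m
           (\<lambda>p. p \<in> {(\<gamma> * y powi u, y) | \<gamma> y.
                        y \<in> subfield_pow2 m - {0} \<and> \<gamma> \<in> Delta \<alpha> s (r * m)})
         \<longleftrightarrow> (r = 1 \<and> (\<exists>t::nat. [u = 2 ^ t] (mod (2 ^ m - 1))))"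
proof -
  interpret primitive_binary_field \<alpha> "r * m"
    using assms(3,5) by unfold_locales
  have supp: "{(\<gamma> * y powi u, y) | \<gamma> y. y \<in> subfield_pow2 m - {0} \<and> \<gamma> \<in> Delta \<alpha> s (r * m)}
      = supp_f m u s"
    by (simp add: supp_f_def)
  have "r = 1" if "is_bent (r * m) m (\<lambda>p. p \<in> supp_f m u s)"
  proof -
    have "\<bar>walsh (r * m) m (\<lambda>p. p \<in> supp_f m u s) 0 0\<bar> = 2 ^ ((r * m + m) div 2)"
      using that zero_in_subfield_pow2 unfolding is_bent_def by blast
    then have "r * m = (r * m + m) div 2"
      by (simp add: walsh_supp_f_0_0)
    then have "r * m \<le> 1 * m"
      by presburger
    then show "r = 1"
      using \<open>odd r\<close> \<open>m \<ge> 3\<close> by (cases r) auto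
  qed
  moreover have "r = 1 \<Longrightarrow> is_bent (r * m) m (\<lambda>p. p \<in> supp_f m u s) \<longleftrightarrow> (\<exists>t. [u = 2 ^ t] (mod 2 ^ m - 1))"
    using bent_iff_two_power[of u s] assms(2,4) by simp
  ultimately show ?thesis
    unfolding supp by blast
qed

end
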